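(* Let $X$ be a real Banach space, let $n\in\mathbb N$, let $S_1,\dots,S_n$ be $w^*$-slices of $B_{X^*}$ and let $\lambda_1,\dots,\lambda_n\in(0,1]$ with $\sum_{i=1}^n\lambda_i=1$. Put $C:=\sum_{i=1}^n\lambda_i S_i$ and assume $\operatorname{diam}(C)=2$. Then for every $\varepsilon>0$ there exist $f_i,g_i\in S_i$ ($i=1,\dots,n$) and $x\in S_X$ such that $(f_i-g_i)(x)>2-\varepsilon$ for all $i\in\{1,\dots,n\}$; consequently $f_i(x)>1-\varepsilon$ and $g_i(-x)>1-\varepsilon$ for all $i$.
   Context: A $w^*$-slice of $B_{X^*}$ is a set $S(B_{X^*},x,\alpha)=\{f\in B_{X^*}: f(x)>1-\alpha\}$ with $x\in S_X$ and $0<\alpha<1$. $B$, $S$ denote closed unit ball and unit sphere. *)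

theory Defs
  imports "HOL-Analysis.Analysis"
begin

text \<open>The dual space X* is modelled as the type of bounded linear functionals
  ('a, real) blinfun with the operator norm. The closed unit ball of X*.\<close>

definition dual_ball :: "('a::real_normed_vector \<Rightarrow>\<^sub>L real) set" where
  "dual_ball = {f. norm f \<le> 1}"

definition wstar_slice :: "'a::real_normed_vector \<Rightarrow> real \<Rightarrow> ('a \<Rightarrow>\<^sub>L real) set" where
  "wstar_slice x \<alpha> = {f \<in> dual_ball. blinfun_apply f x > 1 - \<alpha>}"

end

theory Submission
  imports Defs
begin

(* Since diam C = 2, for a small delta > 0 there are two points
   u = \<Sum> lam_i f_i and v = \<Sum> lam_i g_i of C (f_i, g_i in the slice S_i)
   with ||u - v|| > 2 - delta, and a unit vector z with (u - v)(z) > 2 - delta.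
   Each value (f_i - g_i)(z) is at most 2, so the convex combination
   \<Sum> lam_i (f_i - g_i)(z) can only come within delta of 2 if every single
   term is close to 2:  lam_j (2 - (f_j - g_j)(z)) < delta.  Choosing
   delta \<le> eps * lam_j for all j gives (f_j - g_j)(z) > 2 - eps, and the two
   one-sided estimates follow because |f_j(z)|, |g_j(z)| \<le> 1. *)

text \<open>A set whose diameter exceeds \<open>c \<ge> 0\<close> contains two points at distance
  more than \<open>c\<close>; no boundedness assumption is needed in this direction.\<close>

lemma diameter_exceeded:
  fixes S :: "'a::real_normed_vector set"
  assumes "0 \<le> c" and "c < diameter S"
  shows "\<exists>u\<in>S. \<exists>v\<in>S. c < norm (u - v)"
proof (rule ccontr)
  assume "\<not> ?thesis"
  then have "diameter S \<le> c"
    using \<open>0 \<le> c\<close> by (intro diameter_le) (auto simp: not_less)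
  with \<open>c < diameter S\<close> show False by simp
qed

lemma functional_exceeds_on_sphere:
  fixes \<phi> :: "'a::real_normed_vector \<Rightarrow>\<^sub>L real"
  assumes "c < norm \<phi>" and "0 \<le> c"
  shows "\<exists>z. norm z = 1 \<and> c < \<phi> z"
proof (rule ccontr)
  assume below: "\<not> ?thesis"
  have "\<bar>\<phi> x\<bar> \<le> c * norm x" for x
  proof (cases "x = 0")
    case True
    then show ?thesis by simp
  next
    case False
    define u where "u = x /\<^sub>R norm x"
    have "norm u = 1" "norm (- u) = 1"
      using False by (auto simp: u_def)
    then have "\<phi> u \<le> c" "\<phi> (- u) \<le> c"
      using below by (auto simp: not_less)
    then have "\<bar>\<phi> u\<bar> \<le> c"
      by (auto simp: blinfun.minus_right)
    moreover have "\<phi> x = norm x * \<phi> u"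
      using False by (simp add: u_def blinfun.scaleR_right)
    ultimately show ?thesis
      by (simp add: abs_mult mult_left_mono mult.commute[of c])
  qed
  then have "norm \<phi> \<le> c"
    using \<open>0 \<le> c\<close> by (intro norm_blinfun_bound) auto
  with \<open>c < norm \<phi>\<close> show False by simp
qed

lemma convex_combination_deficit:
  fixes lam d :: "'i \<Rightarrow> real"
  assumes "finite I" and "j \<in> I"
    and nonneg: "\<And>i. i \<in> I \<Longrightarrow> 0 \<le> lam i"
    and "(\<Sum>i\<in>I. lam i) = 1"
    and below: "\<And>i. i \<in> I \<Longrightarrow> d i \<le> M"
    and "M - \<delta> < (\<Sum>i\<in>I. lam i * d i)"
  shows "lam j * (M - d j) < \<delta>"
proof -
  have "lam j * (M - d j) \<le> (\<Sum>i\<in>I. lam i * (M - d i))"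
    using assms(1,2) nonneg below
    by (intro member_le_sum) (auto intro: mult_nonneg_nonneg)
  also have "\<dots> = M * (\<Sum>i\<in>I. lam i) - (\<Sum>i\<in>I. lam i * d i)"
    by (simp add: right_diff_distrib sum_subtractf sum_distrib_left mult.commute)
  also have "\<dots> < \<delta>"
    using assms(4,6) by simp
  finally show ?thesis .
qed

lemma dual_ball_value_bound:
  assumes "f \<in> dual_ball" and "norm z = 1"
  shows "\<bar>f z\<bar> \<le> 1"
  using norm_blinfun[of f z] assms by (simp add: dual_ball_def)

lemma dual_ball_gap:
  assumes "f \<in> dual_ball" "g \<in> dual_ball" and "norm z = 1"
    and gap: "2 - \<epsilon> < (f - g) z"
  shows "1 - \<epsilon> < f z" and "1 - \<epsilon> < g (- z)"
  using dual_ball_value_bound[OF assms(1,3)] dual_ball_value_bound[OF assms(2,3)] gap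
  by (auto simp: blinfun.diff_left blinfun.minus_right)

text \<open>A single tolerance can be chosen below \<open>\<epsilon> * lam i\<close> for finitely many
  positive weights at once (and below 1, to keep \<open>2 - \<delta>\<close> nonnegative).\<close>

lemma uniform_tolerance:
  fixes lam :: "'i \<Rightarrow> real"
  assumes "finite I" and "\<And>i. i \<in> I \<Longrightarrow> 0 < lam i" and "0 < \<epsilon>"
  shows "\<exists>\<delta>>0. \<delta> \<le> 1 \<and> (\<forall>i\<in>I. \<delta> \<le> \<epsilon> * lam i)"
proof (cases "I = {}")
  case True
  then show ?thesis by (intro exI[of _ 1]) auto
next
  case False
  define \<delta> where "\<delta> = min 1 (\<epsilon> * Min (lam ` I))"
  have "0 < Min (lam ` I)"
    using assms(1,2) False by (subst Min_gr_iff) auto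
  moreover have "\<epsilon> * Min (lam ` I) \<le> \<epsilon> * lam i" if "i \<in> I" for i
    using assms(1,3) that by (intro mult_left_mono) auto
  ultimately show ?thesis
    using \<open>0 < \<epsilon>\<close> by (intro exI[of _ \<delta>]) (auto simp: \<delta>_def min.coboundedI2)
qed

theorem mainTheorem2:
  fixes n :: nat
    and x :: "nat \<Rightarrow> 'a::banach"
    and \<alpha> :: "nat \<Rightarrow> real"
    and lam :: "nat \<Rightarrow> real"
    and C :: "('a \<Rightarrow>\<^sub>L real) set"
  assumes x_sphere: "\<forall>i\<in>{1..n}. norm (x i) = 1"
    and alpha_range: "\<forall>i\<in>{1..n}. 0 < \<alpha> i \<and> \<alpha> i < 1"
    and lambda_range: "\<forall>i\<in>{1..n}. 0 < lam i \<and> lam i \<le> 1"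
    and lambda_sum: "(\<Sum>i=1..n. lam i) = 1"
    and C_def: "C = {(\<Sum>i=1..n. lam i *\<^sub>R h i) | h. \<forall>i\<in>{1..n}. h i \<in> wstar_slice (x i) (\<alpha> i)}"
    and diam: "diameter C = 2"
  shows "\<forall>\<epsilon>>0. \<exists>f g :: nat \<Rightarrow> ('a \<Rightarrow>\<^sub>L real). \<exists>z :: 'a. norm z = 1 \<and>
           (\<forall>i\<in>{1..n}. f i \<in> wstar_slice (x i) (\<alpha> i) \<and> g i \<in> wstar_slice (x i) (\<alpha> i) \<and>
              blinfun_apply (f i - g i) z > 2 - \<epsilon> \<and>
              blinfun_apply (f i) z > 1 - \<epsilon> \<and> blinfun_apply (g i) (- z) > 1 - \<epsilon>)"
proof (intro allI impI)
  fix \<epsilon> :: real assume "0 < \<epsilon>"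
  obtain \<delta> where "0 < \<delta>" "\<delta> \<le> 1" and \<delta>_small: "\<forall>i\<in>{1..n}. \<delta> \<le> \<epsilon> * lam i"
    using uniform_tolerance[of "{1..n}" lam \<epsilon>] lambda_range \<open>0 < \<epsilon>\<close> by auto
  obtain f g where f: "\<forall>i\<in>{1..n}. f i \<in> wstar_slice (x i) (\<alpha> i)"
    and g: "\<forall>i\<in>{1..n}. g i \<in> wstar_slice (x i) (\<alpha> i)"
    and far: "2 - \<delta> < norm ((\<Sum>i=1..n. lam i *\<^sub>R f i) - (\<Sum>i=1..n. lam i *\<^sub>R g i))"
    using diameter_exceeded[of "2 - \<delta>" C] \<open>0 < \<delta>\<close> \<open>\<delta> \<le> 1\<close> diam unfolding C_def by auto
  obtain z where z: "norm z = 1"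
    and "2 - \<delta> < ((\<Sum>i=1..n. lam i *\<^sub>R f i) - (\<Sum>i=1..n. lam i *\<^sub>R g i)) z"
    using functional_exceeds_on_sphere[OF far] \<open>\<delta> \<le> 1\<close> by auto
  then have combination: "2 - \<delta> < (\<Sum>i=1..n. lam i * (f i - g i) z)"
    by (simp add: blinfun.sum_left blinfun.diff_left blinfun.scaleR_left
        sum_subtractf right_diff_distrib)
  have ball: "f i \<in> dual_ball" "g i \<in> dual_ball" if "i \<in> {1..n}" for i
    using f g that by (auto simp: wstar_slice_def)
  have gap: "2 - \<epsilon> < (f j - g j) z" if j: "j \<in> {1..n}" for j
  proof -
    have "(f i - g i) z \<le> 2" if "i \<in> {1..n}" for i
      using dual_ball_value_bound[OF ball(1)[OF that] z]
        dual_ball_value_bound[OF ball(2)[OF that] z] by (simp add: blinfun.diff_left)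
    then have "lam j * (2 - (f j - g j) z) < \<delta>"
      using j lambda_range lambda_sum combination
      by (intro convex_combination_deficit[where I = "{1..n}" and M = 2
            and d = "\<lambda>i. (f i - g i) z"]) (auto simp: less_imp_le)
    moreover have "\<delta> \<le> lam j * \<epsilon>"
      using \<delta>_small j by (simp add: mult.commute)
    ultimately have "lam j * (2 - (f j - g j) z) < lam j * \<epsilon>" by linarith
    with j lambda_range show ?thesis by auto
  qed
  show "\<exists>f g :: nat \<Rightarrow> ('a \<Rightarrow>\<^sub>L real). \<exists>z :: 'a. norm z = 1 \<and>
           (\<forall>i\<in>{1..n}. f i \<in> wstar_slice (x i) (\<alpha> i) \<and> g i \<in> wstar_slice (x i) (\<alpha> i) \<and>
              blinfun_apply (f i - g i) z > 2 - \<epsilon> \<and>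
              blinfun_apply (f i) z > 1 - \<epsilon> \<and> blinfun_apply (g i) (- z) > 1 - \<epsilon>)"
    using f g z gap dual_ball_gap[OF ball(1) ball(2) z gap] by blast
qed

end
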